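(* Let $\mathbb{M}$ be a meadow which is nontrivial (i.e. $\mathbb{M}\not\models 0=1$) and let $\mathbb{E}$ be a Boolean algebra with more than two elements. Then the meadow of conditional values $\mathbb{CV}(\mathbb{E},\mathbb{M})$ is not a cancellation meadow; that is, there exists $X\in\mathbb{CV}(\mathbb{E},\mathbb{M})$ with $X\neq v(0)$ and $X\cdot X^{-1}\neq v(1)$.
   Context: A meadow is a structure $(M,+,\cdot,-,{}^{-1},0,1)$ satisfying the axioms of a commutative ring with unit together with $(x^{-1})^{-1}=x$ and $x\cdot(x\cdot x^{-1})=x$ (so inverse is total, e.g. $0^{-1}=0$). A cancellation meadow is a meadow satisfying $x\neq 0\to x\cdot x^{-1}=1$. Boolean algebras are written $(E,\vee,\wedge,\neg,\top,\bot)$. Conditional-value (CV) terms over $\mathbb{E}$ and $\mathbb{M}$ are the closed terms generated by: $v(m)$ for each $m\in\mathbb{M}$; $-X$, $X^{-1}$, $X+Y$, $X\cdot Y$ for CV terms $X,Y$; and $e\!:\to X$ for an element $e\in\mathbb{E}$ and a CV term $X$. Fix a Stone representation of $\mathbb{E}$: a set $S$ and an isomorphism $\phi$ from $\mathbb{E}$ onto a field of subsets $W$ of $S$ (with $\wedge,\vee,\neg,\top,\bot$ mapped to $\cap,\cup$, complement, $S$, $\emptyset$). Each CV term $X$ is interpreted as a map $[\![X]\!]:S\to M$ by $[\![v(m)]\!](s)=m$, $[\![-X]\!](s)=-[\![X]\!](s)$, $[\![X^{-1}]\!](s)=([\![X]\!](s))^{-1}$, $[\![X+Y]\!](s)=[\![X]\!](s)+[\![Y]\!](s)$,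 $[\![X\cdot Y]\!](s)=[\![X]\!](s)\cdot[\![Y]\!](s)$, and $[\![e\!:\to X]\!](s)=[\![X]\!](s)$ if $s\in\phi(e)$, $=0$ otherwise. $\mathbb{CV}(\mathbb{E},\mathbb{M})$ is the set of CV terms modulo the congruence $X\equiv_S Y\iff \forall s\in S\,([\![X]\!](s)=[\![Y]\!](s))$, with the induced meadow operations, zero $v(0)$ and one $v(1)$. *)

theory Defs
  imports Main
begin

text \<open>A meadow: signature (M, +, *, -, inverse, 0, 1); the carrier is the whole type 'm.\<close>
record 'm meadow_sig =
  madd :: "'m \<Rightarrow> 'm \<Rightarrow> 'm"
  mmul :: "'m \<Rightarrow> 'm \<Rightarrow> 'm"
  mneg :: "'m \<Rightarrow> 'm"
  minv :: "'m \<Rightarrow> 'm"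
  mzero :: 'm
  mone :: 'm

definition meadow :: "'m meadow_sig \<Rightarrow> bool" where
  "meadow M \<longleftrightarrow>
     (\<forall>x y z. madd M (madd M x y) z = madd M x (madd M y z)) \<and>
     (\<forall>x y. madd M x y = madd M y x) \<and>
     (\<forall>x. madd M x (mzero M) = x) \<and>
     (\<forall>x. madd M x (mneg M x) = mzero M) \<and>
     (\<forall>x y z. mmul M (mmul M x y) z = mmul M x (mmul M y z)) \<and>
     (\<forall>x y. mmul M x y = mmul M y x) \<and>
     (\<forall>x. mmul M x (mone M) = x) \<and>
     (\<forall>x y z. mmul M x (madd M y z) = madd M (mmul M x y) (mmul M x z)) \<and>
     (\<forall>x. minv M (minv M x) = x) \<and>
     (\<forall>x. mmul M x (mmul M x (minv M x)) = x)"

text \<open>Stone representation of the Boolean algebra 'e: an isomorphism phi from 'e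
  onto a field of subsets (its image) of S.\<close>
definition stone_rep :: "'s set \<Rightarrow> ('e::boolean_algebra \<Rightarrow> 's set) \<Rightarrow> bool" where
  "stone_rep S \<phi> \<longleftrightarrow>
     inj \<phi> \<and> (\<forall>e. \<phi> e \<subseteq> S) \<and>
     (\<forall>a b. \<phi> (inf a b) = \<phi> a \<inter> \<phi> b) \<and>
     (\<forall>a b. \<phi> (sup a b) = \<phi> a \<union> \<phi> b) \<and>
     (\<forall>a. \<phi> (- a) = S - \<phi> a) \<and>
     \<phi> top = S \<and> \<phi> bot = {}"

datatype ('e, 'm) cv_term =
    CVal 'm
  | CNeg "('e, 'm) cv_term"
  | CInv "('e, 'm) cv_term"
  | CAdd "('e, 'm) cv_term" "('e, 'm) cv_term"
  | CMul "('e, 'm) cv_term" "('e, 'm) cv_term"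
  | CCond 'e "('e, 'm) cv_term"

fun cv_sem :: "'m meadow_sig \<Rightarrow> ('e \<Rightarrow> 's set) \<Rightarrow> ('e, 'm) cv_term \<Rightarrow> 's \<Rightarrow> 'm" where
  "cv_sem M \<phi> (CVal m) s = m"
| "cv_sem M \<phi> (CNeg X) s = mneg M (cv_sem M \<phi> X s)"
| "cv_sem M \<phi> (CInv X) s = minv M (cv_sem M \<phi> X s)"
| "cv_sem M \<phi> (CAdd X Y) s = madd M (cv_sem M \<phi> X s) (cv_sem M \<phi> Y s)"
| "cv_sem M \<phi> (CMul X Y) s = mmul M (cv_sem M \<phi> X s) (cv_sem M \<phi> Y s)"
| "cv_sem M \<phi> (CCond e X) s = (if s \<in> \<phi> e then cv_sem M \<phi> X s else mzero M)"

text \<open>The congruence defining CV(E,M): equality in CV(E,M) of the classes of X and Y.\<close>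
definition cv_eq :: "'m meadow_sig \<Rightarrow> 's set \<Rightarrow> ('e \<Rightarrow> 's set) \<Rightarrow>
    ('e, 'm) cv_term \<Rightarrow> ('e, 'm) cv_term \<Rightarrow> bool" where
  "cv_eq M S \<phi> X Y \<longleftrightarrow> (\<forall>s\<in>S. cv_sem M \<phi> X s = cv_sem M \<phi> Y s)"

end

theory Submission
  imports Defs
begin

text \<open>Pick an element \<open>e\<close> of the Boolean algebra other than top and bottom and take
  \<open>X = e :\<rightarrow> v(1)\<close>. Since \<open>\<phi> e\<close> is nonempty, \<open>X\<close> takes the value 1 somewhere, so
  \<open>X \<noteq> v(0)\<close>; since \<open>\<phi> e \<noteq> S\<close>, \<open>X\<close> is 0 at some point, where \<open>X \<cdot> X\<^sup>-\<^sup>1\<close> is 0 and not 1.\<close>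

lemma meadow_mul_zero_right:
  assumes "meadow M"
  shows "mmul M x (mzero M) = mzero M"
proof -
  let ?a = "mmul M x (mzero M)"
  have add_zero: "\<And>x. madd M x (mzero M) = x"
    and add_assoc: "\<And>x y z. madd M (madd M x y) z = madd M x (madd M y z)"
    and add_neg: "\<And>x. madd M x (mneg M x) = mzero M"
    and distrib: "\<And>x y z. mmul M x (madd M y z) = madd M (mmul M x y) (mmul M x z)"
    using assms unfolding meadow_def by blast+
  have "?a = madd M ?a ?a"
    using distrib[of x "mzero M" "mzero M"] add_zero by simp
  then have "madd M ?a (mneg M ?a) = madd M (madd M ?a ?a) (mneg M ?a)"
    by simp
  then show ?thesis
    using add_assoc add_neg add_zero by metis
qed

lemma meadow_mul_zero_left:
  assumes "meadow M"
  shows "mmul M (mzero M) x = mzero M"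
proof -
  have "\<And>x y. mmul M x y = mmul M y x"
    using assms unfolding meadow_def by blast
  then show ?thesis
    using meadow_mul_zero_right[OF assms] by metis
qed

lemma boolean_algebra_three_elements_imp_proper:
  fixes a b c :: "'e::boolean_algebra"
  assumes "a \<noteq> b" "a \<noteq> c" "b \<noteq> c"
  obtains e :: 'e where "e \<noteq> top" "e \<noteq> bot"
  using assms by metis

lemma stone_rep_proper_element:
  assumes "stone_rep S \<phi>" and "e \<noteq> top" and "e \<noteq> bot"
  obtains s t where "s \<in> \<phi> e" "t \<in> S" "t \<notin> \<phi> e"
proof -
  have "inj \<phi>" "\<phi> e \<subseteq> S" "\<phi> top = S" "\<phi> bot = {}"
    using assms(1) unfolding stone_rep_def by auto
  then have "\<phi> e \<noteq> {}" "\<phi> e \<noteq> S"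
    using assms(2,3) by (metis injD)+
  with \<open>\<phi> e \<subseteq> S\<close> show ?thesis
    using that by blast
qed

theorem mainTheorem1:
  fixes M :: "'m meadow_sig" and S :: "'s set" and \<phi> :: "'e::boolean_algebra \<Rightarrow> 's set"
  assumes "meadow M"
    and "mzero M \<noteq> mone M"
    and "\<exists>a b c :: 'e. a \<noteq> b \<and> a \<noteq> c \<and> b \<noteq> c"
    and "stone_rep S \<phi>"
  shows "\<exists>X :: ('e, 'm) cv_term.
           \<not> cv_eq M S \<phi> X (CVal (mzero M)) \<and>
           \<not> cv_eq M S \<phi> (CMul X (CInv X)) (CVal (mone M))"
proof -
  obtain e :: 'e where "e \<noteq> top" "e \<noteq> bot"
    using assms(3) boolean_algebra_three_elements_imp_proper by metis
  then obtain s t where s: "s \<in> \<phi> e" and t: "t \<in> S" "t \<notin> \<phi> e"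
    using assms(4) stone_rep_proper_element by metis
  have "s \<in> S"
    using s assms(4) unfolding stone_rep_def by blast
  let ?X = "CCond e (CVal (mone M)) :: ('e, 'm) cv_term"
  have "\<not> cv_eq M S \<phi> ?X (CVal (mzero M))"
    unfolding cv_eq_def using s \<open>s \<in> S\<close> assms(2) by auto
  moreover have "\<not> cv_eq M S \<phi> (CMul ?X (CInv ?X)) (CVal (mone M))"
    unfolding cv_eq_def using t meadow_mul_zero_left[OF assms(1)] assms(2) by auto
  ultimately show ?thesis
    by blast
qed

end
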